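(* Let $f,g:[a,b]\to[0,\infty)$, $0\le a<b$, be convex functions with $f,g\in L^1[a,b]$. Then \[ \frac{1}{b-a}\int_a^b f(x)^{\frac{x-a}{b-a}}\, g(x)^{\frac{b-x}{b-a}}\,dx \le \frac13\left[f(b)+g(a)\right]+\frac16\left[g(b)+f(a)\right]. \]
   Context: The convention $0^0=1$ is used in the integrand. *)

theory Defs
  imports "HOL-Analysis.Analysis"
begin

definition pow00 :: "real \<Rightarrow> real \<Rightarrow> real" where
  "pow00 x y = (if x = 0 then (if y = 0 then 1 else 0) else x powr y)"

end

theory Submission
  imports Defs
begin

text \<open>
  Write \<open>t = (x - a)/(b - a) \<in> [0,1]\<close>, so the integrand is
  \<open>f(x)^t g(x)^(1-t)\<close>.  The weighted AM--GM (Young) inequality bounds it by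
  \<open>t f(x) + (1-t) g(x)\<close>, and convexity bounds \<open>f(x)\<close> and \<open>g(x)\<close> by their chords.
  This gives a pointwise majorant that is a quadratic polynomial in \<open>t\<close>;
  its integral over \<open>[a,b]\<close> is computed exactly by the fundamental theorem
  of calculus and equals \<open>(b-a)\<close> times the right-hand side.  Finally the
  integral of the integrand is dominated by that of the majorant; as the
  majorant is integrable and nonnegative this holds even without knowing
  integrability of the integrand (whose Bochner integral is 0 otherwise).
\<close>

lemma pow00_weighted_am_gm:
  fixes u v t :: real
  assumes "0 \<le> u" "0 \<le> v" "0 \<le> t" "t \<le> 1"
  shows "pow00 u t * pow00 v (1 - t) \<le> t * u + (1 - t) * v"
proof (cases "u = 0 \<or> v = 0")
  case True
  then show ?thesis using assms by (auto simp: pow00_def)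
next
  case False
  then have "u > 0" "v > 0" using assms by auto
  then show ?thesis
    using Youngs_inequality_0[of t "1 - t" u v] assms by (simp add: pow00_def)
qed

lemma convex_on_chord_bound:
  fixes f :: "real \<Rightarrow> real"
  assumes "convex_on {a..b} f" "a < b" "x \<in> {a..b}"
  shows "f x \<le> (1 - (x - a) / (b - a)) * f a + (x - a) / (b - a) * f b"
proof -
  have "f x \<le> (f b - f a) / (b - a) * (x - a) + f a"
    using convex_onD_Icc'[OF assms(1,3)] .
  also have "\<dots> = (1 - (x - a) / (b - a)) * f a + (x - a) / (b - a) * f b"
    using assms(2) by (simp add: divide_simps) (simp add: algebra_simps)
  finally show ?thesis .
qed

text \<open>The majorant obtained by combining AM--GM with the two chord bounds:
  with \<open>t = (x - a)/(b - a)\<close> it is \<open>t((1-t)f(a) + t f(b)) + (1-t)((1-t)g(a) + t g(b))\<close>,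
  here with the four endpoint values as parameters.\<close>
definition chord_majorant :: "real \<Rightarrow> real \<Rightarrow> real \<Rightarrow> real \<Rightarrow> real \<Rightarrow> real \<Rightarrow> real \<Rightarrow> real"
  where "chord_majorant a b fa fb ga gb x =
    (let t = (x - a) / (b - a) in t * ((1 - t) * fa + t * fb) + (1 - t) * ((1 - t) * ga + t * gb))"

text \<open>The majorant is nonnegative on \<open>[a,b]\<close> when the endpoint values are;
  this is what lets us compare integrals without integrability of the integrand.\<close>
lemma chord_majorant_nonneg:
  assumes "a < b" "x \<in> {a..b}" "0 \<le> fa" "0 \<le> fb" "0 \<le> ga" "0 \<le> gb"
  shows "0 \<le> chord_majorant a b fa fb ga gb x"
proof -
  define t where "t = (x - a) / (b - a)"
  have "0 \<le> t" "0 \<le> 1 - t" using assms(1,2) by (auto simp: t_def field_simps)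
  then show ?thesis
    using assms(3-6) by (simp add: chord_majorant_def Let_def t_def [symmetric])
qed

lemma integrand_le_chord_majorant:
  fixes f g :: "real \<Rightarrow> real"
  assumes "a < b" "convex_on {a..b} f" "convex_on {a..b} g" "x \<in> {a..b}"
    and "f x \<ge> 0" "g x \<ge> 0"
  shows "pow00 (f x) ((x - a) / (b - a)) * pow00 (g x) ((b - x) / (b - a))
           \<le> chord_majorant a b (f a) (f b) (g a) (g b) x"
proof -
  define t where "t = (x - a) / (b - a)"
  have t: "0 \<le> t" "t \<le> 1" using assms(1,4) by (auto simp: t_def field_simps)
  have one_minus_t: "(b - x) / (b - a) = 1 - t" using assms(1) by (simp add: t_def field_simps)
  have cf: "f x \<le> (1 - t) * f a + t * f b"
    unfolding t_def by (rule convex_on_chord_bound[OF assms(2,1,4)])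
  have cg: "g x \<le> (1 - t) * g a + t * g b"
    unfolding t_def by (rule convex_on_chord_bound[OF assms(3,1,4)])
  have "pow00 (f x) t * pow00 (g x) (1 - t) \<le> t * f x + (1 - t) * g x"
    by (rule pow00_weighted_am_gm[OF assms(5,6) t])
  also have "\<dots> \<le> t * ((1 - t) * f a + t * f b) + (1 - t) * ((1 - t) * g a + t * g b)"
    using cf cg t by (intro add_mono mult_left_mono) auto
  finally show ?thesis by (simp add: chord_majorant_def Let_def t_def [symmetric] one_minus_t)
qed

text \<open>Exact integral of the majorant: since \<open>\<integral>t(1-t) = 1/6\<close> and
  \<open>\<integral>t\<^sup>2 = \<integral>(1-t)\<^sup>2 = 1/3\<close> over \<open>[0,1]\<close>, the weights of the endpoint values are
  \<open>1/6, 1/3, 1/3, 1/6\<close>.\<close>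
lemma chord_majorant_has_integral:
  fixes a b fa fb ga gb :: real
  assumes "a < b"
  shows "(chord_majorant a b fa fb ga gb has_integral
           (b - a) * ((1/3) * (fb + ga) + (1/6) * (gb + fa))) {a..b}"
proof -
  define L where "L = b - a"
  have L: "L > 0" using assms by (simp add: L_def)
  define F where "F x = L * ((((x - a) / L)\<^sup>2 / 2 - ((x - a) / L)^3 / 3) * (fa + gb)
      + ((x - a) / L)^3 / 3 * fb - (1 - (x - a) / L)^3 / 3 * ga)" for x
  have "(F has_real_derivative chord_majorant a b fa fb ga gb x) (at x)" for x
    unfolding F_def chord_majorant_def Let_def L_def[symmetric] using L
    by (auto intro!: derivative_eq_intros simp: field_simps power2_eq_square power3_eq_cube)
  then have "(chord_majorant a b fa fb ga gb has_integral F b - F a) {a..b}"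
    using assms by (intro fundamental_theorem_of_calculus)
      (auto simp: has_real_derivative_iff_has_vector_derivative[symmetric]
        intro: has_field_derivative_at_within)
  moreover have "F b - F a = (b - a) * ((1/3) * (fb + ga) + (1/6) * (gb + fa))"
    unfolding F_def using L by (simp add: L_def field_simps power3_eq_cube)
  ultimately show ?thesis by simp
qed

lemma chord_majorant_set_integral:
  fixes a b fa fb ga gb :: real
  assumes "a < b"
  shows "set_integrable lborel {a..b} (chord_majorant a b fa fb ga gb)"
    and "(LINT x:{a..b}|lborel. chord_majorant a b fa fb ga gb x)
           = (b - a) * ((1/3) * (fb + ga) + (1/6) * (gb + fa))"
proof -
  show integrable: "set_integrable lborel {a..b} (chord_majorant a b fa fb ga gb)"
    unfolding chord_majorant_def Let_def
    by (intro borel_integrable_atLeastAtMost' continuous_intros) (use assms in auto)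
  show "(LINT x:{a..b}|lborel. chord_majorant a b fa fb ga gb x)
          = (b - a) * ((1/3) * (fb + ga) + (1/6) * (gb + fa))"
    using set_borel_integral_eq_integral(2)[OF integrable]
      integral_unique[OF chord_majorant_has_integral[OF assms]] by simp
qed

text \<open>Comparison of set integrals against an integrable nonnegative majorant;
  no integrability of the smaller function is needed, since a non-integrable
  function has Bochner integral 0.\<close>
lemma set_integral_le_nonneg_majorant:
  fixes u h :: "'a \<Rightarrow> real"
  assumes "set_integrable M S h"
    and "\<And>x. x \<in> S \<Longrightarrow> u x \<le> h x" "\<And>x. x \<in> S \<Longrightarrow> 0 \<le> h x"
  shows "(LINT x:S|M. u x) \<le> (LINT x:S|M. h x)"
  unfolding set_lebesgue_integral_def
  using assms(1) unfolding set_integrable_def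
  by (rule integral_mono') (auto simp: indicator_def assms(2,3))

theorem corollary1:
  fixes f g :: "real \<Rightarrow> real" and a b :: real
  assumes "0 \<le> a" and "a < b"
    and "convex_on {a..b} f" and "convex_on {a..b} g"
    and "\<And>x. x \<in> {a..b} \<Longrightarrow> f x \<ge> 0"
    and "\<And>x. x \<in> {a..b} \<Longrightarrow> g x \<ge> 0"
    and "set_integrable lborel {a..b} f" and "set_integrable lborel {a..b} g"
  shows "(1 / (b - a)) * (LINT x:{a..b}|lborel.
            pow00 (f x) ((x - a) / (b - a)) * pow00 (g x) ((b - x) / (b - a)))
         \<le> (1/3) * (f b + g a) + (1/6) * (g b + f a)"
proof -
  let ?M = "chord_majorant a b (f a) (f b) (g a) (g b)"
  have endpoints: "0 \<le> f a" "0 \<le> f b" "0 \<le> g a" "0 \<le> g b" using assms(2,5,6) by auto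
  have "(LINT x:{a..b}|lborel. pow00 (f x) ((x - a) / (b - a)) * pow00 (g x) ((b - x) / (b - a)))
          \<le> (LINT x:{a..b}|lborel. ?M x)"
  proof (rule set_integral_le_nonneg_majorant[OF chord_majorant_set_integral(1)[OF assms(2)]])
    fix x assume "x \<in> {a..b}"
    then show "pow00 (f x) ((x - a) / (b - a)) * pow00 (g x) ((b - x) / (b - a)) \<le> ?M x"
      and "0 \<le> ?M x"
      using integrand_le_chord_majorant[OF assms(2-4)] chord_majorant_nonneg[OF assms(2) _ endpoints]
        assms(5,6) by auto
  qed
  then show ?thesis
    unfolding chord_majorant_set_integral(2)[OF assms(2)]
    using assms(2) by (simp add: field_simps)
qed

end
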